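(* Let $t_0\in(0,1)$, $\alpha_a,\alpha_b\in\mathbb{R}$, and restrict the quasimomentum to the diagonal $\theta=(\theta_1,-\theta_1)$, $\theta_1\in[-\pi,\pi]$, so that $F=1+e^{i\theta_1}+e^{-i\theta_1}=1+2\cos\theta_1$ is real. Consider the four branches $$r(F)=\frac{-\alpha_a-\alpha_b\pm\sqrt{4(F-s\,t_0^2)^2+(\alpha_a-\alpha_b)^2}}{2(3+t_0^2)},\qquad s\in\{+1,-1\},$$ which are the roots in $\eta$ of $\det M_2^{AA'}(\eta,\theta)=0$, where, with $T=3+t_0^2$, $$M_2^{AA'}(\eta,\theta)=\begin{pmatrix}-T\eta-\alpha_a&\bar F&0&t_0^2\\ F&-T\eta-\alpha_b&t_0^2&0\\ 0&t_0^2&-T\eta-\alpha_a&\bar F\\ t_0^2&0&F&-T\eta-\alpha_b\end{pmatrix}.$$ Then (a) if $\alpha_a=\alpha_b\ne0$, the dispersion relation of $H_2^{AA'}$ always has Dirac cones at $F=\pm t_0^2$; (b) if $\alpha_a\ne\alpha_b$, the dispersion relation of $H_2^{AA'}$ has no touch, i.e. it always has gaps.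
   Context: $H_2^{AA'}$ is the Schrödinger operator $-u''+q_0u$ (with $q_0$ continuous and even on $[0,1]$) on a periodic quantum graph formed by two identical hexagonal layers (edges of length 1, vertices alternately of type $A$ and type $B$) stacked in $AA'$ fashion: each type-$A$ vertex of one layer is joined by a vertical edge to a type-$B$ vertex of the other layer and vice versa. At each vertex the modified Neumann condition holds: $u_{a_1}(v)=u_{a_2}(v)=u_f(v)/t_0$ for in-layer edges $a_i$ and vertical edges $f$, and $\sum_a u_a'(v)\pm\sum_f t_0u_f'(v)=\delta_vu(v)$, with $\delta_v=\delta_a$ at type-$A$ and $\delta_b$ at type-$B$ vertices. For $\lambda$ outside the Dirichlet spectrum, with $\varphi_0,\varphi_1$ solutions of $-\varphi''+q_0\varphi=\lambda\varphi$ with $\varphi_0(0)=1,\varphi_0(1)=0,\varphi_1(0)=0,\varphi_1(1)=1$, set $\eta=\varphi_1'(1)/\varphi_1'(0)$ and $\alpha_k=\delta_k/\varphi_1'(0)$ (treated as real constants); $\lambda\in\sigma(H_2^{AA'})$ iff $\det M_2^{AA'}(\eta(\lambda),\theta)=0$ for some $\theta\in[-\pi,\pi]^2$, and the dispersion relation is identified with the root branches. A Dirac cone is a point $F_D$ where two branches meet with $r(F)-r(F_D)=\pm\gamma|F-F_D|+O(|F-F_D|^2)$, $\gamma\ne0$; gaps means no two branches touch. *)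

theory Defs
  imports "HOL-Analysis.Analysis"
begin

definition Fdiag :: "real \<Rightarrow> real" where
  "Fdiag th1 = 1 + 2 * cos th1"

definition branch :: "real \<Rightarrow> real \<Rightarrow> real \<Rightarrow> real \<Rightarrow> real \<Rightarrow> real \<Rightarrow> real" where
  "branch t0 aa ab s \<sigma> F =
     (- aa - ab + \<sigma> * sqrt (4 * (F - s * t0^2)^2 + (aa - ab)^2)) / (2 * (3 + t0^2))"

definition dirac_cone :: "(real \<Rightarrow> real) \<Rightarrow> (real \<Rightarrow> real) \<Rightarrow> real \<Rightarrow> bool" where
  "dirac_cone r1 r2 FD \<longleftrightarrow>
     (\<exists>th1\<in>{-pi..pi}. Fdiag th1 = FD) \<and>
     r1 FD = r2 FD \<and>
     (\<exists>\<gamma>::real. \<gamma> \<noteq> 0 \<and> (\<exists>C \<delta>::real. \<delta> > 0 \<and>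
        (\<forall>th1\<in>{-pi..pi}. \<bar>Fdiag th1 - FD\<bar> < \<delta> \<longrightarrow>
           \<bar>r1 (Fdiag th1) - r1 FD - \<gamma> * \<bar>Fdiag th1 - FD\<bar>\<bar> \<le> C * (Fdiag th1 - FD)^2 \<and>
           \<bar>r2 (Fdiag th1) - r2 FD + \<gamma> * \<bar>Fdiag th1 - FD\<bar>\<bar> \<le> C * (Fdiag th1 - FD)^2)))"

end

theory Submission
  imports Defs
begin

text \<open>For equal potentials the square root in a branch collapses to 2 \<bar>F - s t0^2\<bar>, so the
  two branches of each pair are exactly c \<plusminus> \<bar>F - s t0^2\<bar> / (3 + t0^2): a cone with
  vanishing quadratic error at F = s t0^2, which lies in the range [-1, 3] of F. For
  distinct potentials the square root is strictly positive, so every upper branch lies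
  strictly above every lower branch.\<close>

lemma Fdiag_attains:
  assumes "-1 \<le> y" "y \<le> 3"
  shows "\<exists>th1\<in>{-pi..pi}. Fdiag th1 = y"
proof -
  let ?c = "(y - 1) / 2"
  have c: "-1 \<le> ?c" "?c \<le> 1" using assms by auto
  have "arccos ?c \<in> {-pi..pi}" using arccos_lbound[OF c] arccos_ubound[OF c] by auto
  moreover have "Fdiag (arccos ?c) = y" using cos_arccos[OF c] by (simp add: Fdiag_def)
  ultimately show ?thesis by blast
qed

lemma dirac_cone_of_abs:
  assumes "\<exists>th1\<in>{-pi..pi}. Fdiag th1 = FD" and "\<gamma> \<noteq> 0"
    and "\<And>F. r1 F = c + \<gamma> * \<bar>F - FD\<bar>" and "\<And>F. r2 F = c - \<gamma> * \<bar>F - FD\<bar>"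
  shows "dirac_cone r1 r2 FD"
  unfolding dirac_cone_def
proof (intro conjI exI)
  show "\<forall>th1\<in>{-pi..pi}. \<bar>Fdiag th1 - FD\<bar> < 1 \<longrightarrow>
      \<bar>r1 (Fdiag th1) - r1 FD - \<gamma> * \<bar>Fdiag th1 - FD\<bar>\<bar> \<le> 0 * (Fdiag th1 - FD)^2 \<and>
      \<bar>r2 (Fdiag th1) - r2 FD + \<gamma> * \<bar>Fdiag th1 - FD\<bar>\<bar> \<le> 0 * (Fdiag th1 - FD)^2"
    using assms(3,4) by simp
qed (use assms in simp_all)

lemma branch_equal_potentials:
  "branch t0 a a s \<sigma> F = - a / (3 + t0^2) + \<sigma> / (3 + t0^2) * \<bar>F - s * t0^2\<bar>"
proof -
  have "sqrt (4 * (F - s * t0^2)^2 + (a - a)^2) = 2 * \<bar>F - s * t0^2\<bar>"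
    by (simp add: real_sqrt_mult)
  then have "branch t0 a a s \<sigma> F = (2 * (\<sigma> * \<bar>F - s * t0^2\<bar> - a)) / (2 * (3 + t0^2))"
    by (simp add: branch_def algebra_simps)
  also have "\<dots> = (\<sigma> * \<bar>F - s * t0^2\<bar> - a) / (3 + t0^2)"
    by (rule mult_divide_mult_cancel_left) simp
  finally show ?thesis by (simp add: diff_divide_distrib)
qed

lemma branch_lower_less_upper:
  assumes "aa \<noteq> ab"
  shows "branch t0 aa ab s' (-1) F < branch t0 aa ab s 1 F"
proof -
  have "0 < sqrt (4 * (F - s * t0^2)^2 + (aa - ab)^2)"
    and "0 < sqrt (4 * (F - s' * t0^2)^2 + (aa - ab)^2)"
    using assms by (simp_all add: add_nonneg_pos)
  moreover have "0 < 2 * (3 + t0^2)" by (simp add: add_pos_nonneg)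
  ultimately show ?thesis unfolding branch_def by (intro divide_strict_right_mono) linarith+
qed

theorem mainTheorem4:
  fixes t0 aa ab :: real
  assumes "0 < t0" and "t0 < 1"
  shows "(aa = ab \<and> aa \<noteq> 0 \<longrightarrow>
            (\<forall>s\<in>{1, -1::real}. dirac_cone (branch t0 aa ab s 1) (branch t0 aa ab s (-1)) (s * t0^2)))
       \<and> (aa \<noteq> ab \<longrightarrow>
            (\<forall>th1\<in>{-pi..pi}. \<forall>s\<in>{1, -1::real}. \<forall>s'\<in>{1, -1::real}.
               branch t0 aa ab s 1 (Fdiag th1) \<noteq> branch t0 aa ab s' (-1) (Fdiag th1)))"
proof (intro conjI impI ballI)
  fix s :: real
  assume "aa = ab \<and> aa \<noteq> 0" and s: "s \<in> {1, -1}"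
  then have "ab = aa" by simp
  have "\<bar>s * t0^2\<bar> < 1" using s assms by (auto simp: abs_mult power_less_one_iff)
  then have "\<exists>th1\<in>{-pi..pi}. Fdiag th1 = s * t0^2" by (intro Fdiag_attains) linarith+
  moreover have "1 / (3 + t0^2) \<noteq> 0" using add_pos_nonneg[of 3 "t0^2"] by simp
  ultimately show "dirac_cone (branch t0 aa ab s 1) (branch t0 aa ab s (-1)) (s * t0^2)"
    unfolding \<open>ab = aa\<close> by (rule dirac_cone_of_abs) (simp_all add: branch_equal_potentials)
next
  fix th1 s s' :: real
  assume "aa \<noteq> ab"
  then show "branch t0 aa ab s 1 (Fdiag th1) \<noteq> branch t0 aa ab s' (-1) (Fdiag th1)"
    using branch_lower_less_upper by (metis less_irrefl)
qed

end
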